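(* Let $G$ be a planar PCC graph, $\sigma$ a face with $|\sigma|=N\ge42$, and let $A_1,A_5,A_6,\mathcal T,C_1$ and $\tau_v$ ($v\in C_1$) be as in the context. Define $C_{15}=\{v\in C_1:\ \tau_v\text{ has vertices }v,v_1,v_2\text{ with }v_1\in A_1,\ v_2\in A_5\}$, $C_{16}=\{v\in C_1:\ \tau_v\text{ has vertices }v,v_1,v_2\text{ with }v_1\in A_1,\ v_2\in A_6\}$, and let $D$ be the set of vertices $v$ for which there exists $v'\in C_{16}$ adjacent to $v$ such that the two faces on either side of the edge $vv'$ have sizes $5$ and $6$. Then $C_1\cap D\subseteq C_{15}$.
   Context: $G$ is a finite simple connected graph 2-cell embedded in the sphere; $|\sigma|$ is the boundary walk length of face $\sigma$; $f(v)$ is the multiset of sizes of faces incident to $v$ (one per corner), in nondecreasing order; $K(v)=1-\frac{\deg(v)}{2}+\sum_{\sigma\in F(v)}\frac1{|\sigma|}$. A prism (resp. antiprism) of order $N$ is the planar graph with $2N$ vertices, two $N$-faces and $N$ quadrilaterals (resp. $2N$ triangles), each vertex incident to two quadrilaterals and one $N$-face (resp. three triangles and one $N$-face). A planar PCC graph is such a $G$ with $K(v)>0$, $\deg(v)\ge3$ for all $v$, not a prism or antiprism. Given the face $\sigma$ with $|\sigma|=N$: $A_1,A_5,A_6$ are the sets of vertices $v$ on the boundary of $\sigma$ with $f(v)=(3,3,3,N)$, $(3,5,N)$, $(3,6,N)$ respectively; $\mathcal T$ is the set of triangles whose vertex set is $\{v,v_1,v_2\}$ with $v_1,v_2\in A_1\cup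 A_5\cup A_6$; $C_1$ is the set of vertices not on the boundary of $\sigma$ lying on some triangle of $\mathcal T$. For each $v\in C_1$ there is a unique $\tau_v\in\mathcal T$ containing $v$. *)

theory Defs
  imports Complex_Main "HOL-Combinatorics.Combinatorics" "HOL-Library.Multiset"
begin

text \<open>Maps on the sphere are encoded as combinatorial maps (rotation systems):
 a finite set D of darts (half-edges), a fixed-point-free involution al
 (the other half of the same edge) and a permutation rot (rotation of the
 darts around their tail vertex). Vertices are rot-orbits, edges are
 al-orbits, faces are orbits of the face permutation rot o al; the length of
 the boundary walk of a face is the size of its orbit. The dart d lies on the
 face orbit (rot o al) d; the darts at a vertex correspond one-to-one with
 the corners at the vertex, the corner being in the face of that dart.\<close>

definition fperm :: "('d \<Rightarrow> 'd) \<Rightarrow> ('d \<Rightarrow> 'd) \<Rightarrow> 'd \<Rightarrow> 'd" where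
  "fperm al rot = rot \<circ> al"

definition vert_of :: "('d \<Rightarrow> 'd) \<Rightarrow> 'd \<Rightarrow> 'd set" where
  "vert_of rot d = orbit rot d"

definition face_of :: "('d \<Rightarrow> 'd) \<Rightarrow> ('d \<Rightarrow> 'd) \<Rightarrow> 'd \<Rightarrow> 'd set" where
  "face_of al rot d = orbit (fperm al rot) d"

definition verts :: "'d set \<Rightarrow> ('d \<Rightarrow> 'd) \<Rightarrow> 'd set set" where
  "verts D rot = vert_of rot ` D"

definition faces :: "'d set \<Rightarrow> ('d \<Rightarrow> 'd) \<Rightarrow> ('d \<Rightarrow> 'd) \<Rightarrow> 'd set set" where
  "faces D al rot = face_of al rot ` D"

definition sphere_map :: "'d set \<Rightarrow> ('d \<Rightarrow> 'd) \<Rightarrow> ('d \<Rightarrow> 'd) \<Rightarrow> bool" where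
  "sphere_map D al rot \<longleftrightarrow>
     finite D \<and> al permutes D \<and> rot permutes D \<and>
     (\<forall>d\<in>D. al (al d) = d \<and> al d \<noteq> d) \<and>
     \<comment> \<open>connected\<close>
     (\<forall>d\<in>D. \<forall>d'\<in>D. (d, d') \<in> ({(x, al x) | x. x \<in> D} \<union> {(x, rot x) | x. x \<in> D})\<^sup>*) \<and>
     \<comment> \<open>no loops\<close>
     (\<forall>d\<in>D. al d \<notin> vert_of rot d) \<and>
     \<comment> \<open>no multiple edges\<close>
     (\<forall>d\<in>D. \<forall>d'\<in>vert_of rot d. vert_of rot (al d) = vert_of rot (al d') \<longrightarrow> d = d') \<and>
     \<comment> \<open>genus 0: Euler characteristic 2\<close>
     int (card (verts D rot)) - int (card D div 2) + int (card (faces D al rot)) = 2"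

definition deg :: "'d set \<Rightarrow> nat" where
  "deg v = card v"

definition fv :: "('d \<Rightarrow> 'd) \<Rightarrow> ('d \<Rightarrow> 'd) \<Rightarrow> 'd set \<Rightarrow> nat multiset" where
  "fv al rot v = image_mset (\<lambda>d. card (face_of al rot d)) (mset_set v)"

definition curv :: "('d \<Rightarrow> 'd) \<Rightarrow> ('d \<Rightarrow> 'd) \<Rightarrow> 'd set \<Rightarrow> real" where
  "curv al rot v = 1 - real (deg v) / 2 + (\<Sum>d\<in>v. 1 / real (card (face_of al rot d)))"

definition face_verts :: "('d \<Rightarrow> 'd) \<Rightarrow> 'd set \<Rightarrow> 'd set set" where
  "face_verts rot F = vert_of rot ` F"

definition adjacent :: "('d \<Rightarrow> 'd) \<Rightarrow> 'd set \<Rightarrow> 'd set \<Rightarrow> bool" where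
  "adjacent al u w \<longleftrightarrow> (\<exists>d\<in>u. al d \<in> w)"

definition is_prism :: "'d set \<Rightarrow> ('d \<Rightarrow> 'd) \<Rightarrow> ('d \<Rightarrow> 'd) \<Rightarrow> bool" where
  "is_prism D al rot \<longleftrightarrow> (\<exists>N::nat. N \<ge> 3 \<and> card (verts D rot) = 2 * N \<and>
     (\<exists>F1 F2 Q. faces D al rot = {F1, F2} \<union> Q \<and> F1 \<noteq> F2 \<and> F1 \<notin> Q \<and> F2 \<notin> Q \<and>
        card F1 = N \<and> card F2 = N \<and> card Q = N \<and> (\<forall>q\<in>Q. card q = 4) \<and>
        (\<forall>v\<in>verts D rot. card {d\<in>v. face_of al rot d \<in> Q} = 2 \<and>
                          card {d\<in>v. face_of al rot d \<in> {F1, F2}} = 1 \<and> deg v = 3)))"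

definition is_antiprism :: "'d set \<Rightarrow> ('d \<Rightarrow> 'd) \<Rightarrow> ('d \<Rightarrow> 'd) \<Rightarrow> bool" where
  "is_antiprism D al rot \<longleftrightarrow> (\<exists>N::nat. N \<ge> 3 \<and> card (verts D rot) = 2 * N \<and>
     (\<exists>F1 F2 T. faces D al rot = {F1, F2} \<union> T \<and> F1 \<noteq> F2 \<and> F1 \<notin> T \<and> F2 \<notin> T \<and>
        card F1 = N \<and> card F2 = N \<and> card T = 2 * N \<and> (\<forall>t\<in>T. card t = 3) \<and>
        (\<forall>v\<in>verts D rot. card {d\<in>v. face_of al rot d \<in> T} = 3 \<and>
                          card {d\<in>v. face_of al rot d \<in> {F1, F2}} = 1 \<and> deg v = 4)))"

definition planar_PCC :: "'d set \<Rightarrow> ('d \<Rightarrow> 'd) \<Rightarrow> ('d \<Rightarrow> 'd) \<Rightarrow> bool" where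
  "planar_PCC D al rot \<longleftrightarrow> sphere_map D al rot \<and>
     (\<forall>v\<in>verts D rot. curv al rot v > 0 \<and> deg v \<ge> 3) \<and>
     \<not> is_prism D al rot \<and> \<not> is_antiprism D al rot"

definition Aset :: "'d set \<Rightarrow> ('d \<Rightarrow> 'd) \<Rightarrow> ('d \<Rightarrow> 'd) \<Rightarrow> 'd set \<Rightarrow> nat multiset \<Rightarrow> 'd set set" where
  "Aset D al rot S m = {v \<in> face_verts rot S. fv al rot v = m}"

definition A1 :: "'d set \<Rightarrow> ('d \<Rightarrow> 'd) \<Rightarrow> ('d \<Rightarrow> 'd) \<Rightarrow> 'd set \<Rightarrow> 'd set set" where
  "A1 D al rot S = Aset D al rot S {#3, 3, 3, card S#}"
definition A5 :: "'d set \<Rightarrow> ('d \<Rightarrow> 'd) \<Rightarrow> ('d \<Rightarrow> 'd) \<Rightarrow> 'd set \<Rightarrow> 'd set set" where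
  "A5 D al rot S = Aset D al rot S {#3, 5, card S#}"
definition A6 :: "'d set \<Rightarrow> ('d \<Rightarrow> 'd) \<Rightarrow> ('d \<Rightarrow> 'd) \<Rightarrow> 'd set \<Rightarrow> 'd set set" where
  "A6 D al rot S = Aset D al rot S {#3, 6, card S#}"

definition Tset :: "'d set \<Rightarrow> ('d \<Rightarrow> 'd) \<Rightarrow> ('d \<Rightarrow> 'd) \<Rightarrow> 'd set \<Rightarrow> 'd set set" where
  "Tset D al rot S = {T \<in> faces D al rot. card T = 3 \<and>
     (\<exists>v v1 v2. face_verts rot T = {v, v1, v2} \<and>
        v1 \<in> A1 D al rot S \<union> A5 D al rot S \<union> A6 D al rot S \<and>
        v2 \<in> A1 D al rot S \<union> A5 D al rot S \<union> A6 D al rot S)}"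

definition C1 :: "'d set \<Rightarrow> ('d \<Rightarrow> 'd) \<Rightarrow> ('d \<Rightarrow> 'd) \<Rightarrow> 'd set \<Rightarrow> 'd set set" where
  "C1 D al rot S = {v \<in> verts D rot. v \<notin> face_verts rot S \<and>
     (\<exists>T\<in>Tset D al rot S. v \<in> face_verts rot T)}"

definition tau :: "'d set \<Rightarrow> ('d \<Rightarrow> 'd) \<Rightarrow> ('d \<Rightarrow> 'd) \<Rightarrow> 'd set \<Rightarrow> 'd set \<Rightarrow> 'd set" where
  "tau D al rot S v = (THE T. T \<in> Tset D al rot S \<and> v \<in> face_verts rot T)"

definition C15 :: "'d set \<Rightarrow> ('d \<Rightarrow> 'd) \<Rightarrow> ('d \<Rightarrow> 'd) \<Rightarrow> 'd set \<Rightarrow> 'd set set" where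
  "C15 D al rot S = {v \<in> C1 D al rot S. \<exists>v1 v2.
     face_verts rot (tau D al rot S v) = {v, v1, v2} \<and> v1 \<in> A1 D al rot S \<and> v2 \<in> A5 D al rot S}"

definition C16 :: "'d set \<Rightarrow> ('d \<Rightarrow> 'd) \<Rightarrow> ('d \<Rightarrow> 'd) \<Rightarrow> 'd set \<Rightarrow> 'd set set" where
  "C16 D al rot S = {v \<in> C1 D al rot S. \<exists>v1 v2.
     face_verts rot (tau D al rot S v) = {v, v1, v2} \<and> v1 \<in> A1 D al rot S \<and> v2 \<in> A6 D al rot S}"

definition Dset :: "'d set \<Rightarrow> ('d \<Rightarrow> 'd) \<Rightarrow> ('d \<Rightarrow> 'd) \<Rightarrow> 'd set \<Rightarrow> 'd set set" where
  "Dset D al rot S = {v \<in> verts D rot. \<exists>v'\<in>C16 D al rot S. \<exists>d\<in>v. al d \<in> v' \<and>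
     {#card (face_of al rot d), card (face_of al rot (al d))#} = {#5, 6#}}"

end

theory Submission
  imports Defs
begin

text \<open>Let v \<in> C1 be joined to v' \<in> C16 by an edge with a pentagon on one side and a hexagon H on
  the other. Curvature forces v and v' to have degree 3 or 4, all further corners being
  triangles. At v' degree 3 is impossible, and the neighbour of v' along H lies on S.
  A hexagon whose third and sixth vertices lie on S, but not its first two, would make S run
  along two of its edges and produce a vertex with two corners of S around a triangle, i.e.
  negative curvature; so the neighbour of v along H is not on S. This excludes one of the two
  triangles at v from Tset, so \<tau>_v is the other one, and its two other vertices lie in A5
  (they see the pentagon) and A1 (they see two triangles).\<close>

section \<open>Orbits of permutations\<close>

lemma card_orbit_eq_funpow_dist1:
  assumes "permutation f"
  shows "card (orbit f x) = funpow_dist1 f x x"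
proof -
  have x: "x \<in> orbit f x" using assms by (rule permutation_self_in_orbit)
  show ?thesis
    using orbit_conv_funpow_dist1[OF x] inj_on_funpow_dist1[OF x] by (simp add: card_image)
qed

lemma funpow_card_orbit:
  assumes "permutation f"
  shows "(f ^^ card (orbit f x)) x = x"
  using funpow_dist1_prop[OF permutation_self_in_orbit[OF assms]]
  by (simp add: card_orbit_eq_funpow_dist1[OF assms])

lemma orbit_eq_funpow_image:
  assumes "permutation f"
  shows "orbit f x = (\<lambda>m. (f ^^ m) x) ` {..<card (orbit f x)}"
  unfolding card_orbit_eq_funpow_dist1[OF assms]
  using orbit_conv_funpow_dist1[OF permutation_self_in_orbit[OF assms]]
  by (simp add: atLeast0LessThan)

lemma inj_on_funpow_orbit:
  assumes "permutation f"
  shows "inj_on (\<lambda>m. (f ^^ m) x) {..<card (orbit f x)}"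
  unfolding card_orbit_eq_funpow_dist1[OF assms]
  using inj_on_funpow_dist1[OF permutation_self_in_orbit[OF assms]]
  by (simp add: atLeast0LessThan)

lemma orbit_card_3:
  assumes "permutation f" "card (orbit f x) = 3"
  shows "f (f (f x)) = x" "distinct [x, f x, f (f x)]" "orbit f x = {x, f x, f (f x)}"
proof -
  have "distinct (map (\<lambda>m. (f ^^ m) x) [0..<3])"
    using inj_on_funpow_orbit[OF assms(1), of x] assms(2)
    by (simp add: distinct_map lessThan_atLeast0)
  then show "distinct [x, f x, f (f x)]" by (simp add: eval_nat_numeral)
  show "f (f (f x)) = x" using funpow_card_orbit[OF assms(1), of x] assms(2) by (simp add: eval_nat_numeral)
  have "{..<3::nat} = {0, 1, 2}" by auto
  then show "orbit f x = {x, f x, f (f x)}"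
    using orbit_eq_funpow_image[OF assms(1), of x] assms(2) by (simp add: eval_nat_numeral)
qed

lemma orbit_card_4:
  assumes "permutation f" "card (orbit f x) = 4"
  shows "f (f (f (f x))) = x" "distinct [x, f x, f (f x), f (f (f x))]"
    "orbit f x = {x, f x, f (f x), f (f (f x))}"
proof -
  have "distinct (map (\<lambda>m. (f ^^ m) x) [0..<4])"
    using inj_on_funpow_orbit[OF assms(1), of x] assms(2)
    by (simp add: distinct_map lessThan_atLeast0)
  then show "distinct [x, f x, f (f x), f (f (f x))]" by (simp add: eval_nat_numeral)
  show "f (f (f (f x))) = x" using funpow_card_orbit[OF assms(1), of x] assms(2) by (simp add: eval_nat_numeral)
  have "{..<4::nat} = {0, 1, 2, 3}" by auto
  then show "orbit f x = {x, f x, f (f x), f (f (f x))}"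
    using orbit_eq_funpow_image[OF assms(1), of x] assms(2) by (simp add: eval_nat_numeral)
qed

lemma card_orbit_le_2:
  assumes "f (f x) = x"
  shows "card (orbit f x) \<le> 2"
proof -
  have "orbit f x = {(f ^^ m) x | m. m < 2}"
    by (rule orbit_altdef_bounded) (use assms in \<open>simp_all add: numeral_2_eq_2\<close>)
  also have "\<dots> = {x, f x}"
    by (auto simp: numeral_2_eq_2 less_Suc_eq intro: exI[of _ 0] exI[of _ 1])
  finally show ?thesis by (simp add: card_insert_le_m1)
qed

lemma mset_pair_eq_5_6:
  "{#a, b#} = {#5::nat, 6#} \<longleftrightarrow> (a = 5 \<and> b = 6) \<or> (a = 6 \<and> b = 5)"
  by (auto simp: add_eq_conv_diff)

section \<open>Local structure of planar PCC maps\<close>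

locale planar_pcc =
  fixes D :: "'d set" and al rot :: "'d \<Rightarrow> 'd"
  assumes planar_PCC: "planar_PCC D al rot"
begin

abbreviation phi :: "'d \<Rightarrow> 'd" where "phi \<equiv> rot \<circ> al"
abbreviation V :: "'d \<Rightarrow> 'd set" where "V x \<equiv> orbit rot x"
abbreviation F :: "'d \<Rightarrow> 'd set" where "F x \<equiv> orbit phi x"
abbreviation len :: "'d \<Rightarrow> nat" where "len x \<equiv> card (F x)"

text \<open>The corner at the dart x lies between the edges of x and of its rot-predecessor. So the
  faces on the two sides of the edge of x are F x and F (rot x) = F (al x), and the neighbour
  across it is V (al x), which has the corners al x and rot (al x) of sizes len (rot x), len x.\<close>

lemma sphere_map: "sphere_map D al rot"
  using planar_PCC by (simp add: planar_PCC_def)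

lemma finite_D: "finite D"
  using sphere_map by (simp add: sphere_map_def)

lemma al_permutes: "al permutes D"
  using sphere_map by (simp add: sphere_map_def)

lemma rot_permutes: "rot permutes D"
  using sphere_map by (simp add: sphere_map_def)

lemma phi_permutes: "phi permutes D"
  using permutes_compose[OF al_permutes rot_permutes] .

lemma permutation_rot: "permutation rot"
  using rot_permutes finite_D permutation_permutes by blast

lemma permutation_phi: "permutation phi"
  using phi_permutes finite_D permutation_permutes by blast

lemma inj_rot: "inj rot"
  using permutation_rot by (simp add: permutation_bijective bij_is_inj)

lemma inj_phi: "inj phi"
  using permutation_phi by (simp add: permutation_bijective bij_is_inj)

lemma al_al [simp]: "x \<in> D \<Longrightarrow> al (al x) = x"
  using sphere_map by (simp add: sphere_map_def)

lemma al_in_D: "x \<in> D \<Longrightarrow> al x \<in> D"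
  using al_permutes by (simp add: permutes_in_image)

lemma rot_in_D: "x \<in> D \<Longrightarrow> rot x \<in> D"
  using rot_permutes by (simp add: permutes_in_image)

lemma no_loop: "x \<in> D \<Longrightarrow> al x \<notin> V x"
  using sphere_map by (simp add: sphere_map_def vert_of_def)

lemma no_multi_edge: "x \<in> D \<Longrightarrow> y \<in> V x \<Longrightarrow> V (al x) = V (al y) \<Longrightarrow> x = y"
  using sphere_map unfolding sphere_map_def vert_of_def by blast

lemma V_in_verts: "x \<in> D \<Longrightarrow> V x \<in> verts D rot"
  by (simp add: verts_def vert_of_def)

lemma curv_pos: "x \<in> D \<Longrightarrow> curv al rot (V x) > 0"
  using planar_PCC V_in_verts unfolding planar_PCC_def by blast

lemma deg_ge_3: "x \<in> D \<Longrightarrow> card (V x) \<ge> 3"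
  using planar_PCC V_in_verts unfolding planar_PCC_def deg_def by blast

lemma V_self: "x \<in> V x"
  by (rule permutation_self_in_orbit[OF permutation_rot])

lemma F_self: "x \<in> F x"
  by (rule permutation_self_in_orbit[OF permutation_phi])

lemma V_eq: "y \<in> V x \<Longrightarrow> V y = V x"
  by (rule orbit_cyclic_eq3[OF cyclic_on_orbit'[OF permutation_rot]])

lemma F_eq: "y \<in> F x \<Longrightarrow> F y = F x"
  by (rule orbit_cyclic_eq3[OF cyclic_on_orbit'[OF permutation_phi]])

lemma V_rot [simp]: "V (rot x) = V x"
  by (rule permutation_orbit_step[OF permutation_rot])

lemma F_phi [simp]: "F (rot (al x)) = F x"
  using permutation_orbit_step[OF permutation_phi, of x] by simp

lemma F_al: "x \<in> D \<Longrightarrow> F (al x) = F (rot x)"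
  using F_phi[of "al x"] by simp

lemma V_subset_D: "x \<in> D \<Longrightarrow> V x \<subseteq> D"
  by (rule permutes_orbit_subset[OF rot_permutes])

lemma F_subset_D: "x \<in> D \<Longrightarrow> F x \<subseteq> D"
  by (rule permutes_orbit_subset[OF phi_permutes])

lemma finite_V: "x \<in> D \<Longrightarrow> finite (V x)"
  using V_subset_D finite_D finite_subset by blast

lemma finite_F: "x \<in> D \<Longrightarrow> finite (F x)"
  using F_subset_D finite_D finite_subset by blast

lemma V_al_neq: "x \<in> D \<Longrightarrow> V (al x) \<noteq> V x"
  using no_loop V_self by metis

lemma rot_neq: "x \<in> D \<Longrightarrow> rot x \<noteq> x"
proof
  assume "x \<in> D" "rot x = x"
  then have "V x = {x}" by (simp add: orbit_eq_singleton_iff)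
  then show False using deg_ge_3[OF \<open>x \<in> D\<close>] by simp
qed

lemma rot_rot_neq: "x \<in> D \<Longrightarrow> rot (rot x) \<noteq> x"
  using deg_ge_3[of x] card_orbit_le_2[of rot x] by linarith

lemma len_ge_3:
  assumes "x \<in> D"
  shows "len x \<ge> 3"
proof -
  have "len x \<noteq> 0"
    using finite_F[OF assms] F_self[of x] by auto
  moreover have "len x \<noteq> 1"
  proof
    assume "len x = 1"
    then have "rot (al x) = x"
      using funpow_card_orbit[OF permutation_phi, of x] by simp
    then have "V (al x) = V x"
      using V_rot[of "al x"] by simp
    then show False
      using V_al_neq[OF assms] by simp
  qed
  moreover have "len x \<noteq> 2"
  proof
    assume "len x = 2"
    define y where "y = rot (al x)"
    have yD: "y \<in> D" using assms by (simp add: y_def al_in_D rot_in_D)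
    have "(phi ^^ 2) x = x"
      using funpow_card_orbit[OF permutation_phi, of x] \<open>len x = 2\<close> by simp
    then have "rot (al y) = x" by (simp add: y_def numeral_2_eq_2)
    then have "al y \<in> V x"
      using V_self[of "al y"] V_rot[of "al y"] by simp
    moreover have "V (al x) = V (al (al y))"
      using yD by (simp add: y_def)
    ultimately have "x = al y"
      using no_multi_edge[OF assms] by blast
    then have "al x = y"
      using yD by simp
    then have "rot (al x) = al x"
      by (simp add: y_def)
    then show False
      using rot_neq[OF al_in_D[OF assms]] by simp
  qed
  ultimately show ?thesis by linarith
qed

lemma curv_eq: "curv al rot (V x) = 1 + (\<Sum>d\<in>V x. 1 / real (len d) - 1/2)"
  by (simp add: curv_def deg_def face_of_def fperm_def sum_subtractf)

text \<open>Every corner outside P contributes at most 1/3 - 1/2 to the curvature.\<close>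

lemma curv_le_corners:
  assumes "x \<in> D" "P \<subseteq> V x"
  shows "curv al rot (V x) \<le> 1 + (\<Sum>p\<in>P. 1 / real (len p) - 1/2) - real (card (V x) - card P) / 6"
proof -
  have fin: "finite (V x)" using finite_V[OF assms(1)] .
  have "(\<Sum>d\<in>V x - P. 1 / real (len d) - 1/2) \<le> (\<Sum>d\<in>V x - P. - 1/6)"
  proof (rule sum_mono)
    fix d assume "d \<in> V x - P"
    then have "real (len d) \<ge> 3"
      using len_ge_3 V_subset_D[OF assms(1)] by force
    then show "1 / real (len d) - 1/2 \<le> - 1/6" by (simp add: divide_simps)
  qed
  moreover have "(\<Sum>d\<in>V x - P. - 1/6 :: real) = - real (card (V x) - card P) / 6"
    using card_Diff_subset[OF finite_subset[OF assms(2) fin] assms(2)] by simp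
  ultimately show ?thesis
    using curv_eq[of x] sum.subset_diff[OF assms(2) fin, of "\<lambda>d. 1 / real (len d) - 1/2"] by linarith
qed

lemma V_eq_vertex:
  assumes "v \<in> verts D rot" "w \<in> v"
  shows "V w = v"
proof -
  obtain x where "v = V x" using assms(1) by (auto simp: verts_def vert_of_def)
  then show ?thesis using V_eq assms(2) by simp
qed

lemma vertex_in_D:
  assumes "v \<in> verts D rot" "w \<in> v"
  shows "w \<in> D"
proof -
  obtain x where "x \<in> D" "v = V x" using assms(1) by (auto simp: verts_def vert_of_def)
  then show ?thesis using V_subset_D assms(2) by blast
qed

lemma vertex_large_face_hexagon:
  assumes "x \<in> D" "p \<in> V x" "q \<in> V x" "len p \<ge> 12" "len q = 6"
  shows "card (V x) = 3" and "\<And>z. z \<in> V x \<Longrightarrow> z \<noteq> p \<Longrightarrow> z \<noteq> q \<Longrightarrow> len z = 3"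
proof -
  have pq: "p \<noteq> q" using assms(4,5) by auto
  have inv_p: "1 / real (len p) \<le> 1/12" using assms(4) by (simp add: divide_simps)
  have pos: "curv al rot (V x) > 0" using curv_pos[OF assms(1)] .
  have "curv al rot (V x) \<le> 1 + (1 / real (len p) - 1/2) + (1/6 - 1/2) - real (card (V x) - 2) / 6"
    using curv_le_corners[OF assms(1), of "{p, q}"] assms(2,3,5) pq by simp
  moreover have "card (V x) \<noteq> 3 \<Longrightarrow> real (card (V x) - 2) \<ge> 2"
    using deg_ge_3[OF assms(1)] by simp
  ultimately show deg: "card (V x) = 3"
    using pos inv_p by linarith
  fix z assume z: "z \<in> V x" "z \<noteq> p" "z \<noteq> q"
  have "curv al rot (V x) \<le> 1 + (1 / real (len p) - 1/2) + (1/6 - 1/2) + (1 / real (len z) - 1/2)"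
    using curv_le_corners[OF assms(1), of "{p, q, z}"] assms(2,3,5) pq z deg by simp
  moreover have "len z \<ge> 3" using len_ge_3 V_subset_D[OF assms(1)] z(1) by blast
  then have "len z \<noteq> 3 \<Longrightarrow> 1 / real (len z) \<le> 1/4" by (simp add: divide_simps)
  ultimately show "len z = 3"
    using pos inv_p by linarith
qed

lemma vertex_5_6_triangle:
  assumes "x \<in> D" "{#len x, len (rot x)#} = {#5, 6#}" "t \<in> V x" "len t = 3"
  shows "card (V x) = 3 \<and> len (rot (rot x)) = 3
    \<or> card (V x) = 4 \<and> len (rot (rot x)) = 3 \<and> len (rot (rot (rot x))) = 3"
proof -
  have lens: "len x = 5 \<and> len (rot x) = 6 \<or> len x = 6 \<and> len (rot x) = 5"
    using assms(2) by (simp add: mset_pair_eq_5_6)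
  then have sum: "1 / real (len x) + 1 / real (len (rot x)) = 1/5 + 1/6" by auto
  have rx: "rot x \<in> V x" using V_self[of "rot x"] by simp
  have dist: "x \<noteq> rot x" "x \<noteq> t" "rot x \<noteq> t" using lens assms(4) by auto
  have pos: "curv al rot (V x) > 0" using curv_pos[OF assms(1)] .
  have "curv al rot (V x) \<le> 1 + (1 / real (len x) - 1/2) + (1 / real (len (rot x)) - 1/2)
      + (1/3 - 1/2) - real (card (V x) - 3) / 6"
    using curv_le_corners[OF assms(1), of "{x, rot x, t}"] V_self[of x] rx assms(3,4) dist by simp
  moreover have "card (V x) > 4 \<Longrightarrow> real (card (V x) - 3) \<ge> 2" by simp
  ultimately have deg_le_4: "card (V x) \<le> 4"
    using pos sum by linarith
  show ?thesis
  proof (cases "card (V x) = 3")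
    case True
    then have "t = rot (rot x)"
      using orbit_card_3(3)[OF permutation_rot True] assms(3) dist by auto
    then show ?thesis using True assms(4) by simp
  next
    case False
    then have deg: "card (V x) = 4" using deg_le_4 deg_ge_3[OF assms(1)] by simp
    note enum = orbit_card_4[OF permutation_rot deg]
    have "len w = 3" if w: "w = rot (rot x) \<or> w = rot (rot (rot x))" for w
    proof -
      have "w \<in> V x" "x \<noteq> w" "rot x \<noteq> w" using w enum(2,3) by auto
      then have "curv al rot (V x) \<le> 1 + (1 / real (len x) - 1/2) + (1 / real (len (rot x)) - 1/2)
          + (1 / real (len w) - 1/2) - 1/6"
        using curv_le_corners[OF assms(1), of "{x, rot x, w}"] V_self[of x] rx dist deg by simp
      moreover have "len w \<ge> 3" using w assms(1) len_ge_3 rot_in_D by auto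
      then have "len w \<noteq> 3 \<Longrightarrow> 1 / real (len w) \<le> 1/4" by (simp add: divide_simps)
      ultimately show "len w = 3"
        using pos sum by linarith
    qed
    then show ?thesis using deg by simp
  qed
qed

lemma triangle_phi3:
  assumes "y \<in> D" "len (rot y) = 3"
  shows "rot (al (rot (al (rot y)))) = al y"
proof -
  have "len (al y) = 3" using F_al[OF assms(1)] assms(2) by simp
  then show ?thesis using orbit_card_3(1)[OF permutation_phi, of "al y"] assms(1) by simp
qed

lemma triangle_vertices:
  assumes "y \<in> D" "len (rot y) = 3"
  shows "V ` F (rot y) = {V y, V (al y), V (al (rot y))}"
    and "distinct [V y, V (al y), V (al (rot y))]"
proof -
  have ry: "rot y \<in> D" using rot_in_D[OF assms(1)] .
  have "len (al y) = 3" using F_al[OF assms(1)] assms(2) by simp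
  then have "F (rot y) = {al y, rot y, rot (al (rot y))}"
    using orbit_card_3(3)[OF permutation_phi, of "al y"] F_al[OF assms(1)] assms(1) by simp
  then show "V ` F (rot y) = {V y, V (al y), V (al (rot y))}" by auto
  have "V (al (rot (al (rot y)))) \<noteq> V (al (rot y))"
    using V_al_neq[OF rot_in_D[OF al_in_D[OF ry]]] by simp
  then have "V (al y) \<noteq> V (al (rot y))"
    using triangle_phi3[OF assms] by (metis V_rot)
  moreover have "V y \<noteq> V (al y)" using V_al_neq[OF assms(1)] by metis
  moreover have "V y \<noteq> V (al (rot y))" using V_al_neq[OF ry] by simp
  ultimately show "distinct [V y, V (al y), V (al (rot y))]" by simp
qed

end

section \<open>Vertices around a large face\<close>

text \<open>The curvature estimates only need card S \<ge> 12.\<close>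

locale planar_pcc_face = planar_pcc D al rot
  for D :: "'d set" and al rot :: "'d \<Rightarrow> 'd" +
  fixes S :: "'d set"
  assumes S_face: "S \<in> faces D al rot" and S_large: "card S \<ge> 12"
begin

abbreviation N :: nat where "N \<equiv> card S"
abbreviation on_S :: "'d set \<Rightarrow> bool" where "on_S U \<equiv> U \<in> V ` S"
abbreviation A156 :: "'d set set" where
  "A156 \<equiv> A1 D al rot S \<union> A5 D al rot S \<union> A6 D al rot S"

lemma face_verts_eq: "face_verts rot T = V ` T"
  by (simp add: face_verts_def vert_of_def)

lemma S_face_orbit: "\<exists>c\<in>D. S = F c"
  using S_face by (auto simp: faces_def face_of_def fperm_def)

lemma S_subset_D: "S \<subseteq> D"
  using S_face_orbit F_subset_D by blast

lemma F_S: "c \<in> S \<Longrightarrow> F c = S"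
  using S_face_orbit F_eq by blast

lemma len_S: "c \<in> S \<Longrightarrow> len c = N"
  by (simp add: F_S)

lemma in_S_if_F: "F c = S \<Longrightarrow> c \<in> S"
  using F_self by blast

lemma len_in_Aset:
  assumes "U \<in> Aset D al rot S m" "y \<in> U"
  shows "len y \<in># m"
proof -
  obtain c where c: "c \<in> S" "U = V c"
    using assms(1) by (auto simp: Aset_def face_verts_eq)
  then have "finite U" using finite_V S_subset_D by blast
  then have "len y \<in># fv al rot U"
    using assms(2) by (simp add: fv_def face_of_def fperm_def)
  then show ?thesis
    using assms(1) by (simp add: Aset_def)
qed

lemma A156_on_S: "U \<in> A156 \<Longrightarrow> on_S U"
  by (auto simp: A1_def A5_def A6_def Aset_def face_verts_eq)

lemma A1_corner: "U \<in> A1 D al rot S \<Longrightarrow> y \<in> U \<Longrightarrow> len y \<noteq> 5 \<and> len y \<noteq> 6"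
  using len_in_Aset[of U "{#3, 3, 3, N#}"] S_large by (fastforce simp: A1_def)

lemma A6_corner: "U \<in> A6 D al rot S \<Longrightarrow> y \<in> U \<Longrightarrow> len y \<noteq> 5"
  using len_in_Aset[of U "{#3, 6, N#}"] S_large by (fastforce simp: A6_def)

lemma A156_pentagon: "U \<in> A156 \<Longrightarrow> y \<in> U \<Longrightarrow> len y = 5 \<Longrightarrow> U \<in> A5 D al rot S"
  using A1_corner A6_corner by blast

lemma A1_A6_disjoint: "U \<in> A1 D al rot S \<Longrightarrow> U \<notin> A6 D al rot S"
  by (simp add: A1_def A6_def Aset_def)

text \<open>A vertex in A5 or A6 has a single triangle corner.\<close>

lemma A156_two_triangles:
  assumes "U \<in> A156" "y1 \<in> U" "y2 \<in> U" "y1 \<noteq> y2" "len y1 = 3" "len y2 = 3"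
  shows "U \<in> A1 D al rot S"
proof (rule ccontr)
  assume "U \<notin> A1 D al rot S"
  then have U: "U \<in> A5 D al rot S \<union> A6 D al rot S" using assms(1) by blast
  then obtain c where "c \<in> S" "U = V c"
    by (auto simp: A5_def A6_def Aset_def face_verts_eq)
  then have "finite U" using finite_V S_subset_D by blast
  then have "mset_set {y1, y2} \<subseteq># mset_set U"
    using assms(2,3) by (intro subset_imp_msubset_mset_set) auto
  then have "image_mset len (mset_set {y1, y2}) \<subseteq># fv al rot U"
    unfolding fv_def face_of_def fperm_def by (rule image_mset_subseteq_mono)
  then have "{#3, 3#} \<subseteq># fv al rot U"
    using assms(4,5,6) by simp
  then have "count {#3::nat, 3#} 3 \<le> count (fv al rot U) 3"
    by (rule mset_subset_eq_count)
  moreover have "count (fv al rot U) 3 \<le> 1"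
    using U S_large by (auto simp: A5_def A6_def Aset_def)
  ultimately show False by simp
qed

lemma Tset_corner:
  assumes "T \<in> Tset D al rot S" "U \<in> face_verts rot T"
  shows "\<exists>t\<in>U. t \<in> D \<and> T = F t \<and> len t = 3"
proof -
  obtain t0 where t0: "t0 \<in> D" "T = F t0"
    using assms(1) by (auto simp: Tset_def faces_def face_of_def fperm_def)
  obtain t where t: "t \<in> T" "U = V t" using assms(2) by (auto simp: face_verts_eq)
  have "F t = T" using F_eq t(1) t0(2) by blast
  moreover have "card T = 3" using assms(1) by (simp add: Tset_def)
  moreover have "t \<in> D" using F_subset_D[OF t0(1)] t(1) t0(2) by blast
  ultimately show ?thesis using t(2) V_self[of t] by auto
qed

lemma Tset_other_vertices:
  assumes "y \<in> D" "len (rot y) = 3" "F (rot y) \<in> Tset D al rot S" "\<not> on_S (V y)"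
  shows "V (al y) \<in> A156" "V (al (rot y)) \<in> A156"
proof -
  note tri = triangle_vertices[OF assms(1,2)]
  obtain a b c where abc: "face_verts rot (F (rot y)) = {a, b, c}" "b \<in> A156" "c \<in> A156"
    using assms(3) unfolding Tset_def by auto
  have verts: "{V y, V (al y), V (al (rot y))} = {a, b, c}"
    using tri(1) abc(1) by (simp add: face_verts_eq)
  have "b \<noteq> V y" "c \<noteq> V y" using A156_on_S abc(2,3) assms(4) by auto
  moreover have "V y \<in> {a, b, c}" unfolding verts[symmetric] by simp
  ultimately have "a = V y" by simp
  moreover have "V (al y) \<in> {a, b, c}" "V (al (rot y)) \<in> {a, b, c}"
    unfolding verts[symmetric] by simp_all
  ultimately show "V (al y) \<in> A156" "V (al (rot y)) \<in> A156"
    using abc(2,3) tri(2) by auto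
qed

lemma tau_eqI:
  assumes "T \<in> Tset D al rot S" "v \<in> face_verts rot T"
    and "\<And>T'. T' \<in> Tset D al rot S \<Longrightarrow> v \<in> face_verts rot T' \<Longrightarrow> T' = T"
  shows "tau D al rot S v = T"
  unfolding tau_def
proof (rule the_equality)
  show "T \<in> Tset D al rot S \<and> v \<in> face_verts rot T" using assms(1,2) ..
qed (use assms(3) in simp)

subsection \<open>Hexagons touching S\<close>

lemma hexagon_corner_on_S:
  assumes "x \<in> D" "len x = 6" "on_S (V x)"
  shows "card (V x) = 3"
    and "F (rot x) = S \<and> len (rot (rot x)) = 3 \<or> F (rot (rot x)) = S \<and> len (rot x) = 3"
proof -
  obtain c where c: "c \<in> S" "V c = V x" using assms(3) by auto
  then have cx: "c \<in> V x" using V_self[of c] by simp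
  have len_c: "len c \<ge> 12" using len_S[OF c(1)] S_large by simp
  note hex = vertex_large_face_hexagon[OF assms(1) cx V_self len_c assms(2)]
  show deg: "card (V x) = 3" by (rule hex(1))
  note enum = orbit_card_3[OF permutation_rot deg]
  have "c \<noteq> x" using len_c assms(2) by auto
  then have "c = rot x \<or> c = rot (rot x)" using cx enum(3) by simp
  then show "F (rot x) = S \<and> len (rot (rot x)) = 3 \<or> F (rot (rot x)) = S \<and> len (rot x) = 3"
  proof
    assume "c = rot x"
    then show ?thesis using hex(2)[of "rot (rot x)"] enum(2,3) F_S[OF c(1)] by auto
  next
    assume "c = rot (rot x)"
    then show ?thesis using hex(2)[of "rot x"] enum(2,3) F_S[OF c(1)] by auto
  qed
qed

lemma rot3_at_hexagon_on_S:
  assumes "x \<in> D" "len x = 6" "on_S (V (al x))"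
  shows "rot (rot (rot (al x))) = al x"
proof -
  have "card (V (rot (al x))) = 3"
    using hexagon_corner_on_S(1)[OF rot_in_D[OF al_in_D[OF assms(1)]]] assms by simp
  then show ?thesis using orbit_card_3(1)[OF permutation_rot] by simp
qed

lemma hexagon_enters_S:
  assumes "g \<in> D" "len g = 6" "\<not> on_S (V g)" "on_S (V (rot (al g)))"
  shows "al (rot (al g)) \<in> S"
proof -
  define h where "h = rot (al g)"
  have hD: "h \<in> D" using assms(1) by (simp add: h_def al_in_D rot_in_D)
  have rr: "rot (rot h) = al g" using rot3_at_hexagon_on_S[OF assms(1,2)] assms(4) by (simp add: h_def)
  have "F (rot (rot h)) \<noteq> S"
  proof
    assume "F (rot (rot h)) = S"
    then have "rot g \<in> S" using rr F_al[OF assms(1)] in_S_if_F by simp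
    then show False using assms(3) V_rot[of g] by (metis imageI)
  qed
  then have "F (al h) = S"
    using hexagon_corner_on_S(2)[OF hD] assms(2,4) F_al[OF hD] by (simp add: h_def)
  then show ?thesis using in_S_if_F by (simp add: h_def)
qed

lemma hexagon_leaves_S:
  assumes "g \<in> D" "len g = 6" "on_S (V (rot (al g)))" "\<not> on_S (V (rot (al (rot (al g)))))"
  shows "rot g \<in> S"
proof -
  define h where "h = rot (al g)"
  have hD: "h \<in> D" using assms(1) by (simp add: h_def al_in_D rot_in_D)
  have rr: "rot (rot h) = al g" using rot3_at_hexagon_on_S[OF assms(1,2)] assms(3) by (simp add: h_def)
  have "F (rot h) \<noteq> S"
  proof
    assume "F (rot h) = S"
    then have "al h \<in> S" using F_al[OF hD] in_S_if_F by simp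
    then show False using assms(4) V_rot[of "al h"] by (metis h_def imageI)
  qed
  then have "F (rot (rot h)) = S"
    using hexagon_corner_on_S(2)[OF hD] assms(2,3) by (simp add: h_def)
  then show ?thesis using rr F_al[OF assms(1)] in_S_if_F by simp
qed

lemma hexagon_after_S_edge:
  assumes "g \<in> D" "len g = 6" "al g \<in> S"
  shows "len (rot (rot (al g))) = 3"
proof -
  define h where "h = rot (al g)"
  have hD: "h \<in> D" using assms(1) by (simp add: h_def al_in_D rot_in_D)
  have on_S: "on_S (V h)" using assms(3) by (simp add: h_def)
  have rr: "rot (rot h) = al g" using rot3_at_hexagon_on_S[OF assms(1,2)] assms(3) by (simp add: h_def)
  have "len (rot (rot h)) \<noteq> 3" using rr len_S[OF assms(3)] S_large by simp
  then show ?thesis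
    using hexagon_corner_on_S(2)[OF hD] assms(2) on_S by (simp add: h_def)
qed

text \<open>Two corners of S and a triangle at one vertex give curvature at most 2/N - 1/6 \<le> 0.\<close>

lemma no_triangle_between_S_corners:
  assumes "e \<in> S" "rot (rot e) \<in> S" "len (rot e) = 3"
  shows False
proof -
  have eD: "e \<in> D" using assms(1) S_subset_D by blast
  have lens: "len e = N" "len (rot (rot e)) = N" using len_S assms(1,2) by auto
  have dist: "e \<noteq> rot e" "rot e \<noteq> rot (rot e)" "e \<noteq> rot (rot e)"
    using lens assms(3) S_large rot_rot_neq[OF eD] by auto
  have "rot e \<in> V e" "rot (rot e) \<in> V e" using V_self V_rot by (metis, metis)
  then have "curv al rot (V e) \<le> 1 + (1 / real N - 1/2) + (1/3 - 1/2) + (1 / real N - 1/2)"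
    using curv_le_corners[OF eD, of "{e, rot e, rot (rot e)}"] V_self[of e] dist lens assms(3)
    by simp
  moreover have "1 / real N \<le> 1/12" using S_large by (simp add: divide_simps)
  ultimately show False using curv_pos[OF eD] by linarith
qed

lemma no_triangle_across_hexagon_edge:
  assumes "g \<in> D" "len g = 6" "len (rot g) = 3" "rot (rot g) \<in> S" "rot (rot (al g)) \<in> S"
  shows False
proof -
  define e where "e = al (rot g)"
  have eD: "rot e \<in> D" using assms(1) by (simp add: e_def al_in_D rot_in_D)
  have "rot (al e) = rot (rot g)" using rot_in_D[OF assms(1)] by (simp add: e_def)
  then have "F e = S" using F_phi[of e] F_S[OF assms(4)] by simp
  moreover have "rot e = al (rot (rot (al g)))"
  proof -
    have "on_S (V (al g))" using assms(5) V_rot[of "al g"] V_rot[of "rot (al g)"] by (metis imageI)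
    then have "rot (al (rot e)) = rot (rot (rot (al g)))"
      using triangle_phi3[OF assms(1,3)] rot3_at_hexagon_on_S[OF assms(1,2)] by (simp add: e_def)
    then have "al (al (rot e)) = al (rot (rot (al g)))" using inj_rot by (simp add: inj_eq)
    then show ?thesis using eD by simp
  qed
  then have "F (rot (rot e)) = S" using F_S[OF assms(5)] F_phi[of "rot (rot (al g))"] by simp
  moreover have "len (rot e) = 3" using assms(3) by (simp add: e_def)
  ultimately show False using no_triangle_between_S_corners in_S_if_F by blast
qed

text \<open>S runs along the hexagon edges of g2 and g4; the triangle across the edge of g3 then has a
  vertex with two corners in S.\<close>

lemma hexagon_meets_S:
  assumes "g0 \<in> D" "len g0 = 6" "g5 \<in> D" "rot (al g5) = g0"
    and "\<not> on_S (V g0)" "\<not> on_S (V (rot (al g0)))"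
    and "on_S (V (rot (al (rot (al g0)))))" "on_S (V g5)"
  shows False
proof -
  define g1 where "g1 = rot (al g0)"
  define g2 where "g2 = rot (al g1)"
  define g3 where "g3 = rot (al g2)"
  define g4 where "g4 = rot (al g3)"
  have D: "g1 \<in> D" "g2 \<in> D" "g3 \<in> D" "g4 \<in> D"
    using assms(1) by (simp_all add: g1_def g2_def g3_def g4_def al_in_D rot_in_D)
  have len: "len g1 = 6" "len g2 = 6" "len g3 = 6" "len g4 = 6"
    using assms(2) by (simp_all add: g1_def g2_def g3_def g4_def)
  have "(phi ^^ 6) g0 = g0" using funpow_card_orbit[OF permutation_phi, of g0] assms(2) by simp
  then have "phi (rot (al g4)) = phi g5"
    using assms(4) by (simp add: g1_def g2_def g3_def g4_def eval_nat_numeral)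
  then have g45: "rot (al g4) = g5"
    using injD[OF inj_phi, of "rot (al g4)" g5] by simp
  have ag2: "al g2 \<in> S"
    using hexagon_enters_S[OF D(1) len(1)] assms(6,7) by (simp add: g1_def g2_def)
  then have "rot (rot g3) \<in> S" using rot3_at_hexagon_on_S[OF D(2) len(2)] by (simp add: g3_def)
  moreover have "len (rot g3) = 3"
    using hexagon_after_S_edge[OF D(2) len(2) ag2] by (simp add: g3_def)
  moreover have "rot g4 \<in> S"
    using hexagon_leaves_S[OF D(4) len(4)] g45 assms(4,5,8) by simp
  ultimately show False
    using no_triangle_across_hexagon_edge[OF D(3) len(3)] by (simp add: g4_def)
qed

subsection \<open>The triangle \<tau>_v at vertices of C1 and C16\<close>

lemma C1_not_on_S: "v \<in> C1 D al rot S \<Longrightarrow> \<not> on_S v"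
  by (simp add: C1_def face_verts_eq)

lemma C1_triangle_corner:
  assumes "v \<in> C1 D al rot S"
  obtains t where "t \<in> v" "t \<in> D" "len t = 3" "F t \<in> Tset D al rot S"
proof -
  obtain T where "T \<in> Tset D al rot S" "v \<in> face_verts rot T"
    using assms unfolding C1_def by auto
  with Tset_corner that show ?thesis by metis
qed

lemma tau_eq_F:
  assumes "v \<in> C1 D al rot S" "w0 \<in> v"
    and "\<And>w. w \<in> v \<Longrightarrow> len w = 3 \<Longrightarrow> F w \<in> Tset D al rot S \<Longrightarrow> F w = F w0"
  shows "F w0 \<in> Tset D al rot S" "tau D al rot S v = F w0"
proof -
  have v: "v \<in> verts D rot" using assms(1) by (simp add: C1_def)
  obtain t where t: "t \<in> v" "len t = 3" "F t \<in> Tset D al rot S"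
    using C1_triangle_corner[OF assms(1)] by metis
  show T: "F w0 \<in> Tset D al rot S" using assms(3)[OF t] t(3) by simp
  have "v \<in> face_verts rot (F w0)"
    using V_eq_vertex[OF v assms(2)] F_self[of w0] by (auto simp: face_verts_eq)
  moreover have "T = F w0" if T: "T \<in> Tset D al rot S" "v \<in> face_verts rot T" for T
  proof -
    obtain t where "t \<in> v" "T = F t" "len t = 3" using Tset_corner[OF T] by auto
    then show ?thesis using assms(3) T(1) by simp
  qed
  ultimately show "tau D al rot S v = F w0" using tau_eqI[OF T] by blast
qed

lemma A1_neighbour:
  assumes "y \<in> D" "V (al y) \<in> A1 D al rot S"
  shows "len y \<noteq> 5 \<and> len y \<noteq> 6 \<and> len (rot y) \<noteq> 5 \<and> len (rot y) \<noteq> 6"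
  using A1_corner[OF assms(2) V_self] A1_corner[OF assms(2), of "rot (al y)"] V_self[of "rot (al y)"]
    F_al[OF assms(1)] by simp

lemma A6_neighbour:
  assumes "y \<in> D" "V (al y) \<in> A6 D al rot S"
  shows "len y \<noteq> 5 \<and> len (rot y) \<noteq> 5"
  using A6_corner[OF assms(2) V_self] A6_corner[OF assms(2), of "rot (al y)"] V_self[of "rot (al y)"]
    F_al[OF assms(1)] by simp

lemma A156_neighbour_pentagon:
  assumes "y \<in> D" "V (al y) \<in> A156" "len y = 5 \<or> len (rot y) = 5"
  shows "V (al y) \<in> A5 D al rot S"
  using A156_pentagon[OF assms(2) V_self] A156_pentagon[OF assms(2), of "rot (al y)"]
    V_self[of "rot (al y)"] F_al[OF assms(1)] assms(3) by auto

lemma A156_neighbour_triangles: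
  assumes "y \<in> D" "V (al y) \<in> A156" "len y = 3" "len (rot y) = 3"
  shows "V (al y) \<in> A1 D al rot S"
proof (rule A156_two_triangles[OF assms(2) V_self])
  show "rot (al y) \<in> V (al y)" using V_self[of "rot (al y)"] by simp
  show "al y \<noteq> rot (al y)" using rot_neq[OF al_in_D[OF assms(1)]] by simp
  show "len (al y) = 3" "len (rot (al y)) = 3" using F_al[OF assms(1)] assms(3,4) by simp_all
qed

lemma C15I:
  assumes "V y \<in> C1 D al rot S" "y \<in> D" "len (rot y) = 3" "tau D al rot S (V y) = F (rot y)"
    and "V (al y) \<in> A5 D al rot S \<and> V (al (rot y)) \<in> A1 D al rot S
      \<or> V (al y) \<in> A1 D al rot S \<and> V (al (rot y)) \<in> A5 D al rot S"
  shows "V y \<in> C15 D al rot S"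
proof -
  have "face_verts rot (tau D al rot S (V y)) = {V y, V (al y), V (al (rot y))}"
    using triangle_vertices(1)[OF assms(2,3)] assms(4) by (simp add: face_verts_eq)
  then show ?thesis
    using assms(1,5) unfolding C15_def by (auto simp: insert_commute)
qed

lemma C16_tau_neighbours:
  assumes "V y \<in> C16 D al rot S" "y \<in> D" "len (rot y) = 3" "tau D al rot S (V y) = F (rot y)"
  shows "V (al y) \<in> A1 D al rot S \<and> V (al (rot y)) \<in> A6 D al rot S
    \<or> V (al y) \<in> A6 D al rot S \<and> V (al (rot y)) \<in> A1 D al rot S"
proof -
  obtain a b where ab: "face_verts rot (tau D al rot S (V y)) = {V y, a, b}"
    "a \<in> A1 D al rot S" "b \<in> A6 D al rot S"
    using assms(1) unfolding C16_def by auto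
  note tri = triangle_vertices[OF assms(2,3)]
  have verts: "{V y, V (al y), V (al (rot y))} = {V y, a, b}"
    using tri(1) ab(1) assms(4) by (simp add: face_verts_eq)
  have "\<not> on_S (V y)" using assms(1) C1_not_on_S by (simp add: C16_def)
  then have "a \<noteq> V y" "b \<noteq> V y" using ab(2,3) A156_on_S by auto
  moreover have "a \<noteq> b" using ab(2,3) A1_A6_disjoint by auto
  moreover have "a \<in> {V y, V (al y), V (al (rot y))}" "b \<in> {V y, V (al y), V (al (rot y))}"
    unfolding verts by simp_all
  ultimately show ?thesis using ab(2,3) by auto
qed

lemma C1_5_6_deg:
  assumes "V x \<in> C1 D al rot S" "x \<in> D" "{#len x, len (rot x)#} = {#5, 6#}"
  shows "card (V x) = 3 \<and> len (rot (rot x)) = 3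
    \<or> card (V x) = 4 \<and> len (rot (rot x)) = 3 \<and> len (rot (rot (rot x))) = 3"
proof -
  obtain t where "t \<in> V x" "len t = 3" using C1_triangle_corner[OF assms(1)] by metis
  then show ?thesis using vertex_5_6_triangle[OF assms(2,3)] by blast
qed

lemma C1_5_6_deg3:
  assumes "V x \<in> C1 D al rot S" "x \<in> D" "{#len x, len (rot x)#} = {#5, 6#}" "card (V x) = 3"
  shows "tau D al rot S (V x) = F (rot (rot x))"
    and "V (al (rot x)) \<in> A156" "V (al (rot (rot x))) \<in> A156"
proof -
  have lens: "len x \<noteq> 3" "len (rot x) \<noteq> 3" "len (rot (rot x)) = 3"
    using assms(3,4) C1_5_6_deg[OF assms(1-3)] by (auto simp: mset_pair_eq_5_6)
  note enum = orbit_card_3[OF permutation_rot assms(4)]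
  have "rot (rot x) \<in> V x" using enum(3) by simp
  note tau = tau_eq_F[OF assms(1) this]
  have "w = rot (rot x)" if "w \<in> V x" "len w = 3" for w
    using that enum(3) lens by auto
  then have T: "F (rot (rot x)) \<in> Tset D al rot S" "tau D al rot S (V x) = F (rot (rot x))"
    using tau by auto
  then show "tau D al rot S (V x) = F (rot (rot x))" by simp
  show "V (al (rot x)) \<in> A156" "V (al (rot (rot x))) \<in> A156"
    using Tset_other_vertices[OF rot_in_D[OF assms(2)]] lens(3) T(1) C1_not_on_S[OF assms(1)]
    by simp_all
qed

lemma C1_5_6_deg4:
  assumes "V x \<in> C1 D al rot S" "x \<in> D" "{#len x, len (rot x)#} = {#5, 6#}" "card (V x) = 4"
  shows "len (rot (rot x)) = 3" "len (rot (rot (rot x))) = 3"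
    and "F (rot (rot (rot x))) \<notin> Tset D al rot S \<Longrightarrow>
      F (rot (rot x)) \<in> Tset D al rot S \<and> tau D al rot S (V x) = F (rot (rot x))"
    and "F (rot (rot x)) \<notin> Tset D al rot S \<Longrightarrow>
      F (rot (rot (rot x))) \<in> Tset D al rot S \<and> tau D al rot S (V x) = F (rot (rot (rot x)))"
proof -
  show lens: "len (rot (rot x)) = 3" "len (rot (rot (rot x))) = 3"
    using assms(4) C1_5_6_deg[OF assms(1-3)] by auto
  have "len x \<noteq> 3" "len (rot x) \<noteq> 3" using assms(3) by (auto simp: mset_pair_eq_5_6)
  then have triangles: "w = rot (rot x) \<or> w = rot (rot (rot x))" if "w \<in> V x" "len w = 3" for w
    using that orbit_card_4(3)[OF permutation_rot assms(4)] by auto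
  have in_V: "rot (rot x) \<in> V x" "rot (rot (rot x)) \<in> V x"
    using orbit_card_4(3)[OF permutation_rot assms(4)] by simp_all
  show "F (rot (rot x)) \<in> Tset D al rot S \<and> tau D al rot S (V x) = F (rot (rot x))"
    if "F (rot (rot (rot x))) \<notin> Tset D al rot S"
    using tau_eq_F[OF assms(1) in_V(1)] triangles that by blast
  show "F (rot (rot (rot x))) \<in> Tset D al rot S \<and> tau D al rot S (V x) = F (rot (rot (rot x)))"
    if "F (rot (rot x)) \<notin> Tset D al rot S"
    using tau_eq_F[OF assms(1) in_V(2)] triangles that by blast
qed

lemma C16_tau_hexagon_neighbour:
  assumes "V y \<in> C16 D al rot S" "y \<in> D" "len (rot y) = 3" "tau D al rot S (V y) = F (rot y)"
  shows "len y \<in> {5, 6} \<Longrightarrow> len y = 6 \<and> on_S (V (al y))"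
    and "len (rot (rot y)) \<in> {5, 6} \<Longrightarrow> len (rot (rot y)) = 6 \<and> on_S (V (al (rot y)))"
proof -
  note A1_A6 = C16_tau_neighbours[OF assms]
  show "len y = 6 \<and> on_S (V (al y))" if "len y \<in> {5, 6}"
  proof -
    have "V (al y) \<notin> A1 D al rot S" using A1_neighbour[OF assms(2)] that by auto
    then have "V (al y) \<in> A6 D al rot S" using A1_A6 by simp
    then show ?thesis using A6_neighbour[OF assms(2)] A156_on_S that by auto
  qed
  show "len (rot (rot y)) = 6 \<and> on_S (V (al (rot y)))" if "len (rot (rot y)) \<in> {5, 6}"
  proof -
    have "V (al (rot y)) \<notin> A1 D al rot S" using A1_neighbour[OF rot_in_D[OF assms(2)]] that by auto
    then have "V (al (rot y)) \<in> A6 D al rot S" using A1_A6 by simp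
    then show ?thesis using A6_neighbour[OF rot_in_D[OF assms(2)]] A156_on_S that by auto
  qed
qed

lemma C16_5_6_not_deg3:
  assumes "V x \<in> C16 D al rot S" "x \<in> D" "{#len x, len (rot x)#} = {#5, 6#}"
  shows "card (V x) \<noteq> 3"
proof
  assume deg: "card (V x) = 3"
  have C1: "V x \<in> C1 D al rot S" using assms(1) by (simp add: C16_def)
  have lens: "len (rot (rot x)) = 3" "len x \<in> {5, 6}" "len (rot x) \<in> {5, 6}" "len x \<noteq> len (rot x)"
    using C1_5_6_deg[OF C1 assms(2,3)] deg assms(3) by (auto simp: mset_pair_eq_5_6)
  have "rot (rot (rot x)) = x" using orbit_card_3(1)[OF permutation_rot deg] .
  moreover have "tau D al rot S (V (rot x)) = F (rot (rot x))"
    using C1_5_6_deg3(1)[OF C1 assms(2,3) deg] by simp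
  ultimately show False
    using C16_tau_hexagon_neighbour[of "rot x"] assms(1,2) rot_in_D lens by simp
qed

lemma C16_5_6_vertex:
  assumes "V x \<in> C16 D al rot S" "x \<in> D" "{#len x, len (rot x)#} = {#5, 6#}"
  shows "card (V x) = 4"
    and "len (rot x) = 6 \<Longrightarrow> on_S (V (al (rot x)))"
    and "len x = 6 \<Longrightarrow> on_S (V (al (rot (rot (rot x)))))"
proof -
  have C1: "V x \<in> C1 D al rot S" using assms(1) by (simp add: C16_def)
  show deg: "card (V x) = 4"
    using C1_5_6_deg[OF C1 assms(2,3)] C16_5_6_not_deg3[OF assms] by auto
  define r1 where "r1 = rot x"
  define r2 where "r2 = rot r1"
  have D: "r1 \<in> D" "r2 \<in> D" using assms(2) by (simp_all add: r1_def r2_def rot_in_D)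
  have C16: "V r1 \<in> C16 D al rot S" "V r2 \<in> C16 D al rot S" using assms(1) by (simp_all add: r1_def r2_def)
  note deg4 = C1_5_6_deg4[OF C1 assms(2,3) deg]
  have tri: "len (rot r1) = 3" "len (rot r2) = 3" using deg4(1,2) by (simp_all add: r1_def r2_def)
  have rot_r3: "rot (rot r2) = x" using orbit_card_4(1)[OF permutation_rot deg] by (simp add: r1_def r2_def)
  have lens: "len x \<in> {5, 6}" "len r1 \<in> {5, 6}" "len x = 6 \<longleftrightarrow> len r1 = 5"
    using assms(3) by (auto simp: r1_def mset_pair_eq_5_6)
  have not_on_S: "\<not> on_S (V r1)" "\<not> on_S (V r2)"
    using C1_not_on_S[OF C1] by (simp_all add: r1_def r2_def)
  consider "F (rot r2) \<notin> Tset D al rot S" | "F (rot r1) \<notin> Tset D al rot S"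
    | "F (rot r1) \<in> Tset D al rot S" "F (rot r2) \<in> Tset D al rot S" by blast
  then have "(len r1 = 6 \<longrightarrow> on_S (V (al r1))) \<and> (len x = 6 \<longrightarrow> on_S (V (al (rot r2))))"
  proof cases
    case 1
    then have "tau D al rot S (V r1) = F (rot r1)" using deg4(3) by (simp add: r1_def r2_def)
    then show ?thesis using C16_tau_hexagon_neighbour(1)[OF C16(1) D(1) tri(1)] lens by auto
  next
    case 2
    then have "tau D al rot S (V r2) = F (rot r2)" using deg4(4) by (simp add: r1_def r2_def)
    then show ?thesis using C16_tau_hexagon_neighbour(2)[OF C16(2) D(2) tri(2)] rot_r3 lens by auto
  next
    case 3
    then show ?thesis
      using Tset_other_vertices(1)[OF D(1) tri(1) _ not_on_S(1)]
        Tset_other_vertices(2)[OF D(2) tri(2) _ not_on_S(2)] A156_on_S by simp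
  qed
  then show "len (rot x) = 6 \<Longrightarrow> on_S (V (al (rot x)))"
    and "len x = 6 \<Longrightarrow> on_S (V (al (rot (rot (rot x)))))"
    by (simp_all add: r1_def r2_def)
qed

lemma C15_deg4_pentagon_at_rot:
  assumes "V x \<in> C1 D al rot S" "x \<in> D" "{#len x, len (rot x)#} = {#5, 6#}" "card (V x) = 4"
    and "len (rot x) = 5" "\<not> on_S (V (al (rot (rot (rot x)))))"
  shows "V x \<in> C15 D al rot S"
proof -
  define r1 where "r1 = rot x"
  define r2 where "r2 = rot r1"
  have D: "r1 \<in> D" "r2 \<in> D" using assms(2) by (simp_all add: r1_def r2_def rot_in_D)
  note deg4 = C1_5_6_deg4[OF assms(1-4)]
  have tri: "len (rot r1) = 3" "len (rot r2) = 3" using deg4(1,2) by (simp_all add: r1_def r2_def)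
  have not_on_S: "\<not> on_S (V r1)" "\<not> on_S (V r2)"
    using C1_not_on_S[OF assms(1)] by (simp_all add: r1_def r2_def)
  have "F (rot r2) \<notin> Tset D al rot S"
    using Tset_other_vertices(2)[OF D(2) tri(2) _ not_on_S(2)] assms(6) A156_on_S
    by (auto simp: r1_def r2_def)
  then have tau: "F (rot r1) \<in> Tset D al rot S" "tau D al rot S (V r1) = F (rot r1)"
    using deg4(3) by (simp_all add: r1_def r2_def)
  note A156 = Tset_other_vertices[OF D(1) tri(1) tau(1) not_on_S(1)]
  have "V (al r1) \<in> A5 D al rot S" using A156_neighbour_pentagon[OF D(1) A156(1)] assms(5) r1_def by simp
  moreover have "V (al (rot r1)) \<in> A1 D al rot S"
    using A156_neighbour_triangles[OF D(2)] A156(2) tri by (simp add: r2_def)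
  ultimately have "V r1 \<in> C15 D al rot S"
    using C15I[OF _ D(1) tri(1) tau(2)] assms(1) by (simp add: r1_def)
  then show ?thesis by (simp add: r1_def)
qed

lemma C15_deg4_pentagon_at_dart:
  assumes "V x \<in> C1 D al rot S" "x \<in> D" "{#len x, len (rot x)#} = {#5, 6#}" "card (V x) = 4"
    and "len x = 5" "\<not> on_S (V (al (rot x)))"
  shows "V x \<in> C15 D al rot S"
proof -
  define r1 where "r1 = rot x"
  define r2 where "r2 = rot r1"
  define r3 where "r3 = rot r2"
  have D: "r1 \<in> D" "r2 \<in> D" "r3 \<in> D" using assms(2) by (simp_all add: r1_def r2_def r3_def rot_in_D)
  note deg4 = C1_5_6_deg4[OF assms(1-4)]
  have tri: "len (rot r1) = 3" "len (rot r2) = 3" using deg4(1,2) by (simp_all add: r1_def r2_def)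
  have not_on_S: "\<not> on_S (V r1)" "\<not> on_S (V r2)"
    using C1_not_on_S[OF assms(1)] by (simp_all add: r1_def r2_def)
  have "F (rot r1) \<notin> Tset D al rot S"
    using Tset_other_vertices(1)[OF D(1) tri(1) _ not_on_S(1)] assms(6) A156_on_S by (auto simp: r1_def)
  then have tau: "F (rot r2) \<in> Tset D al rot S" "tau D al rot S (V r2) = F (rot r2)"
    using deg4(4) by (simp_all add: r1_def r2_def)
  note A156 = Tset_other_vertices[OF D(2) tri(2) tau(1) not_on_S(2)]
  have "rot r3 = x" using orbit_card_4(1)[OF permutation_rot assms(4)] by (simp add: r1_def r2_def r3_def)
  then have "V (al (rot r2)) \<in> A5 D al rot S"
    using A156_neighbour_pentagon[OF D(3)] A156(2) assms(5) by (simp add: r3_def)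
  moreover have "V (al r2) \<in> A1 D al rot S"
    using A156_neighbour_triangles[OF D(2) A156(1)] tri by (simp add: r2_def)
  ultimately have "V r2 \<in> C15 D al rot S"
    using C15I[OF _ D(2) tri(2) tau(2)] assms(1) by (simp add: r1_def r2_def)
  then show ?thesis by (simp add: r1_def r2_def)
qed

lemma C15_of_C16_edge_hexagon:
  assumes "V d \<in> C1 D al rot S" "V (al d) \<in> C16 D al rot S" "d \<in> D" "len d = 6" "len (al d) = 5"
  shows "V d \<in> C15 D al rot S"
proof -
  define d' where "d' = al d"
  have d': "V d' \<in> C16 D al rot S" "d' \<in> D" "{#len d', len (rot d')#} = {#5, 6#}"
    using assms(2,3,4,5) al_in_D by (simp_all add: d'_def)
  have "on_S (V (al (rot d')))" using C16_5_6_vertex(2)[OF d'] assms(3,4) by (simp add: d'_def)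
  moreover have "\<not> on_S (V d)" "\<not> on_S (V d')"
    using C1_not_on_S assms(1) d'(1) by (simp_all add: C16_def)
  ultimately have no_S_pred: "\<not> on_S (V (al p))" if "p \<in> D" "rot p = d" for p
    using hexagon_meets_S[OF assms(3,4) al_in_D[OF that(1)]] that by (auto simp: d'_def)
  have ms: "{#len d, len (rot d)#} = {#5, 6#}" using F_al[OF assms(3)] assms(4,5) by simp
  have "card (V d) \<noteq> 3"
  proof
    assume deg: "card (V d) = 3"
    then have "rot (rot (rot d)) = d" using orbit_card_3(1)[OF permutation_rot] by simp
    moreover have "on_S (V (al (rot (rot d))))"
      using C1_5_6_deg3(3)[OF assms(1,3) ms deg] A156_on_S by simp
    ultimately show False using no_S_pred[OF rot_in_D[OF rot_in_D[OF assms(3)]]] by simp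
  qed
  then have deg: "card (V d) = 4" using C1_5_6_deg[OF assms(1,3) ms] by auto
  then have "rot (rot (rot (rot d))) = d" using orbit_card_4(1)[OF permutation_rot] by simp
  then have "\<not> on_S (V (al (rot (rot (rot d)))))" using no_S_pred assms(3) rot_in_D by simp
  then show ?thesis
    using C15_deg4_pentagon_at_rot[OF assms(1,3) ms deg] F_al[OF assms(3)] assms(5) by simp
qed

lemma C15_of_C16_edge_pentagon:
  assumes "V d \<in> C1 D al rot S" "V (al d) \<in> C16 D al rot S" "d \<in> D" "len d = 5" "len (al d) = 6"
  shows "V d \<in> C15 D al rot S"
proof -
  define d' where "d' = al d"
  have d': "V d' \<in> C16 D al rot S" "d' \<in> D" "{#len d', len (rot d')#} = {#5, 6#}"
    using assms(2,3,4,5) al_in_D by (simp_all add: d'_def add_mset_commute)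
  define g5 where "g5 = al (rot (rot (rot d')))"
  have g5: "g5 \<in> D" "rot (al g5) = d'"
    using orbit_card_4(1)[OF permutation_rot C16_5_6_vertex(1)[OF d']] d'(2)
    by (simp_all add: g5_def rot_in_D al_in_D)
  have "on_S (V g5)" using C16_5_6_vertex(3)[OF d'] assms(5) by (simp add: g5_def d'_def)
  moreover have "\<not> on_S (V d')" "\<not> on_S (V (rot (al d')))"
    using C1_not_on_S assms(1,3) d'(1) by (simp_all add: C16_def d'_def)
  ultimately have no_S: "\<not> on_S (V (al (rot d)))"
    using hexagon_meets_S[OF d'(2) _ g5] assms(3,5) by (auto simp: d'_def)
  have ms: "{#len d, len (rot d)#} = {#5, 6#}" using F_al[OF assms(3)] assms(4,5) by simp
  have "card (V d) \<noteq> 3"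
    using C1_5_6_deg3(2)[OF assms(1,3) ms] A156_on_S no_S by auto
  then have "card (V d) = 4" using C1_5_6_deg[OF assms(1,3) ms] by auto
  then show ?thesis using C15_deg4_pentagon_at_dart[OF assms(1,3) ms _ assms(4) no_S] by simp
qed

lemma C1_Dset_C15:
  assumes "v \<in> C1 D al rot S" "v \<in> Dset D al rot S"
  shows "v \<in> C15 D al rot S"
proof -
  obtain v' d where v': "v' \<in> C16 D al rot S" and d: "d \<in> v" "al d \<in> v'"
    and lens: "{#len d, len (al d)#} = {#5, 6#}" and v: "v \<in> verts D rot"
    using assms(2) by (auto simp: Dset_def face_of_def fperm_def)
  have dD: "d \<in> D" and Vd: "V d = v" using vertex_in_D[OF v d(1)] V_eq_vertex[OF v d(1)] by simp_all
  have "v' \<in> verts D rot" using v' by (simp add: C16_def C1_def)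
  then have "V (al d) = v'" using V_eq_vertex d(2) by simp
  then show ?thesis
    using C15_of_C16_edge_hexagon[OF _ _ dD] C15_of_C16_edge_pentagon[OF _ _ dD] assms(1) v' Vd lens
    by (auto simp: mset_pair_eq_5_6)
qed

end

theorem lemma13p4:
  fixes D :: "'d set" and al rot :: "'d \<Rightarrow> 'd" and S :: "'d set"
  assumes "planar_PCC D al rot"
    and "S \<in> faces D al rot"
    and "card S \<ge> 42"
  shows "C1 D al rot S \<inter> Dset D al rot S \<subseteq> C15 D al rot S"
proof -
  interpret planar_pcc_face D al rot S
    using assms by unfold_locales simp_all
  show ?thesis using C1_Dset_C15 by blast
qed

end
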